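(* For every $x\in\mathcal{L}_q\cup\mathcal{T}_q$, $\mu^{-1}(\mu(x))=x$.
   Context: Let $S_b=(F_b,P_b,V_\infty,\delta_b)$ be a first-order signature ($F_b$ function symbols, constants being $0$-ary functions; $P_b$ predicate symbols; $V_\infty$ an infinite set of variables; $\delta_b$ the arities). Formulas are built from atoms with $\neg,\wedge,\forall$. Fix a finite set $V\subseteq V_\infty$ of "quotable variables". The augmented signature $S$ has predicate symbols $P=P_b\sqcup\{\mathbf{T}\}$ ($\mathbf{T}$ unary) and function symbols $F=F_b\sqcup\underline{F}\sqcup\underline{P}\sqcup\underline{V}\sqcup\{\underline{\wedge},\underline{\neg},\underline{\forall},\mathrm{quote}\}$, where $\underline{F}=\{\underline{f}:f\in F_b\}$ ($\underline f$ has the arity of $f$), $\underline{P}=\{\underline{p}:p\in P\}$ ($\underline p$ is a function symbol with the arity of $p$), $\underline{V}=\{\underline{x}:x\in V\}$ (constants), $\underline\wedge,\underline\forall$ binary, $\underline\neg,\mathrm{quote}$ unary; all new symbols are fresh. The set $\mathcal{Q}$ is the least set of terms containing each $\underline x\in\underline V$ and closed under forming $\underline f(t_1,\dots,t_n)$ ($\underline f\in\underline F$), $\underline p(t_1,\dots,t_n)$ ($\underline p\in\underline P$), $\underline\wedge(t_1,t_2)$, $\underline\neg(t)$, $\underline\forall(\underline x,t)$ ($\underline x\in\underline V$), $\mathrm{quote}(t)$, for $t,t_i\in\mathcal{Q}$. The set $\mathcal Q_v$ is defined identically but additionally contains $\mathrm{quote}(x)$ for each variable $x\in V$ (closed under the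 same constructors). The sets $\mathcal{T}_q$ (quotable terms), $\mathcal{L}_q$ (quotable formulas) and the map $\mu$ are defined by simultaneous induction: $\mathcal T_q$ contains every variable $x\in V$, every $f(t_1,\dots,t_n)$ with $f\in F_b$, $t_i\in\mathcal T_q$, and every term $\mu(e)$ with $e\in\mathcal T_q\cup\mathcal L_q$; $\mathcal L_q$ contains $p(t_1,\dots,t_n)$ with $p\in P_b$, $t_i\in\mathcal T_q$, and $\forall x.\varphi$ ($x\in V$), $\neg\varphi$, $\varphi_1\wedge\varphi_2$ for $\varphi,\varphi_i\in\mathcal L_q$. The quotation map is: $\mu(f(t_1,\dots,t_n))=\underline f(\mu(t_1),\dots,\mu(t_n))$ for $f\in F_b$; $\mu(t_q)=\mathrm{quote}(t_q)$ for $t_q\in\mathcal Q$; $\mu(p(t_1,\dots,t_n))=\underline p(\mu(t_1),\dots,\mu(t_n))$; $\mu(x)=\underline x$; $\mu(\varphi_1\wedge\varphi_2)=\underline\wedge(\mu(\varphi_1),\mu(\varphi_2))$; $\mu(\neg\varphi)=\underline\neg(\mu(\varphi))$; $\mu(\forall x.\varphi)=\underline\forall(\underline x,\mu(\varphi))$. Quoted substitution: for a term $t$ and $x\in V$, $z[\underline x\leftarrow t]_q$ is defined on $z\in\mathcal Q_v$ by: $\underline x[\underline x\leftarrow t]_q=t$; $\underline y[\underline x\leftarrow t]_q=\underline y$ for $\underline y\ne\underline x$; it commutes with $\underline f\in\underline F$, $\underline p\in\underline P$, $\underline\wedge$ and $\underline\neg$ (applied to each argument); $\underline\forall(t_1,t_2)[\underline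 x\leftarrow t]_q=\underline\forall(t_1[\underline x\leftarrow t]_q,t_2[\underline x\leftarrow t]_q)$ if $t_1\neq\underline x$; $\underline\forall(\underline x,t_2)[\underline x\leftarrow t]_q=\underline\forall(\underline x,t_2)$; in all other cases (e.g. $\mathrm{quote}(s)$) the term is unchanged. The unquote operator $\mu^{-1}$ on $\mathcal Q_v$: $\mu^{-1}(\underline f(t_1,\dots,t_n))=f(\mu^{-1}(t_1),\dots,\mu^{-1}(t_n))$; $\mu^{-1}(\underline p(t_1,\dots,t_n))=p(\mu^{-1}(t_1),\dots,\mu^{-1}(t_n))$; $\mu^{-1}(\mathrm{quote}(t))=t$; $\mu^{-1}(\varphi_1\underline\wedge\varphi_2)=\mu^{-1}(\varphi_1)\wedge\mu^{-1}(\varphi_2)$; $\mu^{-1}(\underline\neg\varphi)=\neg\mu^{-1}(\varphi)$; $\mu^{-1}(\underline\forall(\underline x,\varphi))=\forall x.\ \mu^{-1}(\varphi[\underline x\leftarrow\mathrm{quote}(x)]_q)$; $\mu^{-1}(\underline x)=x$; $\mu^{-1}(t)=t$ in all other cases. *)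

theory Defs
  imports Main
begin

text \<open>Terms and formulas live in one
datatype; the sets Tq and Lq below carve out the well-formed quotable terms and
formulas.  Predicate symbols of S are 'p option: Some p is a base predicate,
None is the truth predicate T (arity 1).\<close>

datatype ('f, 'p, 'v) expr =
    Var 'v
  | Fn 'f "('f, 'p, 'v) expr list"
  | QFn 'f "('f, 'p, 'v) expr list"
  | QPred "'p option" "('f, 'p, 'v) expr list"
  | QVar 'v
  | QAnd "('f, 'p, 'v) expr" "('f, 'p, 'v) expr"
  | QNeg "('f, 'p, 'v) expr"
  | QAll "('f, 'p, 'v) expr" "('f, 'p, 'v) expr"
  | Quote "('f, 'p, 'v) expr"
  | Pred "'p option" "('f, 'p, 'v) expr list"
  | Neg "('f, 'p, 'v) expr"
  | And "('f, 'p, 'v) expr" "('f, 'p, 'v) expr"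
  | All 'v "('f, 'p, 'v) expr"

definition arP :: "('p \<Rightarrow> nat) \<Rightarrow> 'p option \<Rightarrow> nat" where
  "arP arp p = (case p of None \<Rightarrow> 1 | Some q \<Rightarrow> arp q)"

inductive_set Qset :: "'v set \<Rightarrow> ('f \<Rightarrow> nat) \<Rightarrow> ('p \<Rightarrow> nat) \<Rightarrow> ('f, 'p, 'v) expr set"
  for V arf arp where
  qvar: "x \<in> V \<Longrightarrow> QVar x \<in> Qset V arf arp"
| qfn: "length ts = arf f \<Longrightarrow> (\<forall>t\<in>set ts. t \<in> Qset V arf arp) \<Longrightarrow> QFn f ts \<in> Qset V arf arp"
| qpred: "length ts = arP arp p \<Longrightarrow> (\<forall>t\<in>set ts. t \<in> Qset V arf arp) \<Longrightarrow> QPred p ts \<in> Qset V arf arp"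
| qand: "t1 \<in> Qset V arf arp \<Longrightarrow> t2 \<in> Qset V arf arp \<Longrightarrow> QAnd t1 t2 \<in> Qset V arf arp"
| qneg: "t \<in> Qset V arf arp \<Longrightarrow> QNeg t \<in> Qset V arf arp"
| qall: "x \<in> V \<Longrightarrow> t \<in> Qset V arf arp \<Longrightarrow> QAll (QVar x) t \<in> Qset V arf arp"
| quote: "t \<in> Qset V arf arp \<Longrightarrow> Quote t \<in> Qset V arf arp"

text \<open>The quotation map mu.  On the quotable terms/formulas the catch-all clause
applies exactly to the elements of Q, where mu(t_q) = quote(t_q).\<close>
fun mu :: "('f, 'p, 'v) expr \<Rightarrow> ('f, 'p, 'v) expr" where
  "mu (Fn f ts) = QFn f (map mu ts)"
| "mu (Pred p ts) = QPred p (map mu ts)"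
| "mu (Var x) = QVar x"
| "mu (And a b) = QAnd (mu a) (mu b)"
| "mu (Neg a) = QNeg (mu a)"
| "mu (All x a) = QAll (QVar x) (mu a)"
| "mu e = Quote e"

inductive Tq and Lq for V :: "'v set" and arf :: "'f \<Rightarrow> nat" and arp :: "'p \<Rightarrow> nat" where
  tvar: "x \<in> V \<Longrightarrow> Tq V arf arp (Var x)"
| tfn: "length ts = arf f \<Longrightarrow> (\<forall>t\<in>set ts. Tq V arf arp t) \<Longrightarrow> Tq V arf arp (Fn f ts)"
| tmu: "Tq V arf arp e \<or> Lq V arf arp e \<Longrightarrow> Tq V arf arp (mu e)"
| lpred: "length ts = arp p \<Longrightarrow> (\<forall>t\<in>set ts. Tq V arf arp t) \<Longrightarrow> Lq V arf arp (Pred (Some p) ts)"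
| lall: "x \<in> V \<Longrightarrow> Lq V arf arp a \<Longrightarrow> Lq V arf arp (All x a)"
| lneg: "Lq V arf arp a \<Longrightarrow> Lq V arf arp (Neg a)"
| land: "Lq V arf arp a \<Longrightarrow> Lq V arf arp b \<Longrightarrow> Lq V arf arp (And a b)"

fun qsubst :: "'v \<Rightarrow> ('f, 'p, 'v) expr \<Rightarrow> ('f, 'p, 'v) expr \<Rightarrow> ('f, 'p, 'v) expr" where
  "qsubst x t (QVar y) = (if y = x then t else QVar y)"
| "qsubst x t (QFn f ts) = QFn f (map (qsubst x t) ts)"
| "qsubst x t (QPred p ts) = QPred p (map (qsubst x t) ts)"
| "qsubst x t (QAnd a b) = QAnd (qsubst x t a) (qsubst x t b)"
| "qsubst x t (QNeg a) = QNeg (qsubst x t a)"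
| "qsubst x t (QAll t1 t2) =
     (if t1 = QVar x then QAll t1 t2 else QAll (qsubst x t t1) (qsubst x t t2))"
| "qsubst x t z = z"

text \<open>Size measure not looking inside quote (used for termination of unquote).\<close>
primrec qsize :: "('f, 'p, 'v) expr \<Rightarrow> nat" where
  "qsize (Var x) = 1"
| "qsize (Fn f ts) = Suc (sum_list (map qsize ts))"
| "qsize (QFn f ts) = Suc (sum_list (map qsize ts))"
| "qsize (QPred p ts) = Suc (sum_list (map qsize ts))"
| "qsize (QVar x) = 1"
| "qsize (QAnd a b) = Suc (qsize a + qsize b)"
| "qsize (QNeg a) = Suc (qsize a)"
| "qsize (QAll a b) = Suc (qsize a + qsize b)"
| "qsize (Quote a) = 1"
| "qsize (Pred p ts) = Suc (sum_list (map qsize ts))"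
| "qsize (Neg a) = Suc (qsize a)"
| "qsize (And a b) = Suc (qsize a + qsize b)"
| "qsize (All x a) = Suc (qsize a)"

lemma qsize_qsubst: "qsize t = 1 \<Longrightarrow> qsize (qsubst x t e) = qsize e"
proof (induction e)
  case (QFn f ts) then show ?case by (simp cong: map_cong)
next
  case (QPred p ts) then show ?case by (simp cong: map_cong)
qed auto

lemma qsize_elem: "t \<in> set ts \<Longrightarrow> qsize t \<le> sum_list (map qsize ts)"
  by (induction ts) auto

function unq :: "('f, 'p, 'v) expr \<Rightarrow> ('f, 'p, 'v) expr" where
  "unq (QFn f ts) = Fn f (map unq ts)"
| "unq (QPred p ts) = Pred p (map unq ts)"
| "unq (Quote t) = t"
| "unq (QAnd a b) = And (unq a) (unq b)"
| "unq (QNeg a) = Neg (unq a)"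
| "unq (QAll (QVar x) a) = All x (unq (qsubst x (Quote (Var x)) a))"
| "unq (QVar x) = Var x"
| "unq (Var x) = Var x"
| "unq (Fn f ts) = Fn f ts"
| "unq (QAll (Var v) a) = QAll (Var v) a"
| "unq (QAll (Fn f ts) a) = QAll (Fn f ts) a"
| "unq (QAll (QFn f ts) a) = QAll (QFn f ts) a"
| "unq (QAll (QPred p ts) a) = QAll (QPred p ts) a"
| "unq (QAll (QAnd b c) a) = QAll (QAnd b c) a"
| "unq (QAll (QNeg b) a) = QAll (QNeg b) a"
| "unq (QAll (QAll b c) a) = QAll (QAll b c) a"
| "unq (QAll (Quote b) a) = QAll (Quote b) a"
| "unq (QAll (Pred p ts) a) = QAll (Pred p ts) a"
| "unq (QAll (Neg b) a) = QAll (Neg b) a"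
| "unq (QAll (And b c) a) = QAll (And b c) a"
| "unq (QAll (All y b) a) = QAll (All y b) a"
| "unq (Pred p ts) = Pred p ts"
| "unq (Neg a) = Neg a"
| "unq (And a b) = And a b"
| "unq (All x a) = All x a"
  by pat_completeness auto
termination
  by (relation "measure qsize")
     (auto simp: qsize_qsubst dest: qsize_elem)

end

theory Submission
  imports Defs
begin

text \<open>
Unquoting \<open>\<forall>x. \<phi>\<close> substitutes \<open>quote(x)\<close> for \<open>x\<close> (underlined) in the quoted body
before unquoting it, so a structural induction on \<open>\<phi>\<close> has to allow for a set \<open>S\<close> of
quoted variables already replaced by their quotations.  Such a simultaneous substitution,
followed by one more substitution of \<open>quote(x)\<close>, is the simultaneous substitution for
\<open>S \<union> {x}\<close>; and since unquoting turns \<open>quote(x)\<close> back into the variable \<open>x\<close>,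
\<open>\<mu>\<^sup>-\<^sup>1\<close> inverts \<open>\<mu>\<close> whatever \<open>S\<close> is.
\<close>

fun qsubst_quotes :: "'v set \<Rightarrow> ('f, 'p, 'v) expr \<Rightarrow> ('f, 'p, 'v) expr" where
  "qsubst_quotes S (QVar y) = (if y \<in> S then Quote (Var y) else QVar y)"
| "qsubst_quotes S (QFn f ts) = QFn f (map (qsubst_quotes S) ts)"
| "qsubst_quotes S (QPred p ts) = QPred p (map (qsubst_quotes S) ts)"
| "qsubst_quotes S (QAnd a b) = QAnd (qsubst_quotes S a) (qsubst_quotes S b)"
| "qsubst_quotes S (QNeg a) = QNeg (qsubst_quotes S a)"
| "qsubst_quotes S (QAll (QVar y) a) = QAll (QVar y) (qsubst_quotes (S - {y}) a)"
| "qsubst_quotes S (QAll t a) = QAll (qsubst_quotes S t) (qsubst_quotes S a)"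
| "qsubst_quotes S z = z"

lemma qsubst_quotes_empty: "qsubst_quotes {} (t :: ('f, 'p, 'v) expr) = t"
  by (induction "{} :: 'v set" t rule: qsubst_quotes.induct) (simp_all add: map_idI)

lemma qsubst_quotes_eq_QVar: "qsubst_quotes S t = QVar y \<longleftrightarrow> t = QVar y \<and> y \<notin> S"
  by (induction S t rule: qsubst_quotes.induct) auto

lemma qsubst_quote_qsubst_quotes:
  "qsubst x (Quote (Var x)) (qsubst_quotes S t) = qsubst_quotes (insert x S) t"
  by (induction S t rule: qsubst_quotes.induct) (auto simp: insert_Diff_if qsubst_quotes_eq_QVar)

lemma unq_qsubst_quotes_mu: "unq (qsubst_quotes S (mu e)) = e"
  by (induction e arbitrary: S) (auto simp: qsubst_quote_qsubst_quotes map_idI)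

text \<open>Since \<open>mu\<close> is total here, it is inverted by \<open>unq\<close> on every expression, not only
on quotable terms and formulas.\<close>

lemma unq_mu: "unq (mu e) = e"
  using unq_qsubst_quotes_mu[of "{}" e] by (simp add: qsubst_quotes_empty)

theorem proposition4p16:
  fixes V :: "'v set" and arf :: "'f \<Rightarrow> nat" and arp :: "'p \<Rightarrow> nat"
    and x :: "('f, 'p, 'v) expr"
  assumes "infinite (UNIV :: 'v set)" and "finite V"
    and "Lq V arf arp x \<or> Tq V arf arp x"
  shows "unq (mu x) = x"
  by (rule unq_mu)

end
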